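(* Let $r\in(0,1)$, let $\vec x=(x_n)_{n\in\mathbb{N}}$ be a complex sequence, and let $L\in\mathbb{C}$. If $\lim_{N\to\infty}\mathbb{E}^{\mathrm{Bin}(r)}_{n\le N}(\vec x)=L$, then $\lim_{N\to\infty}\mathbb{E}^{\mathrm{Bin}(r)}_{n\le N}(T\vec x)=L$. Consequently, for every $k\in\mathbb{N}$, $\lim_{N\to\infty}\mathbb{E}^{\mathrm{Bin}(r)}_{n\le N}(T^k\vec x)=L$.
   Context: $\mathbb{N}=\{0,1,2,\dots\}$. For $r\in(0,1)$, a complex sequence $\vec y=(y_n)_{n\in\mathbb{N}}$ and $N\in\mathbb{N}$, $\mathbb{E}^{\mathrm{Bin}(r)}_{n\le N}(\vec y)=\sum_{n=0}^{N}\binom{N}{n}r^n(1-r)^{N-n}y_n$. $T$ is the right-shift operator: $T(y_0,y_1,y_2,\dots)=(0,y_0,y_1,\dots)$, so $(T^k\vec y)_n=y_{n-k}$ for $n\ge k$ and $0$ for $n<k$. *)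

theory Defs
  imports Complex_Main
begin

definition binE :: "real \<Rightarrow> (nat \<Rightarrow> complex) \<Rightarrow> nat \<Rightarrow> complex" where
  "binE r y N = (\<Sum>n=0..N. of_real (real (N choose n) * r ^ n * (1 - r) ^ (N - n)) * y n)"

definition shiftR :: "(nat \<Rightarrow> complex) \<Rightarrow> nat \<Rightarrow> complex" where
  "shiftR y n = (if n = 0 then 0 else y (n - 1))"

end

theory Submission
  imports Defs
begin

text \<open>The binomial averages of the shifted sequence satisfy
  E_(N+1)(T x) = (1 - r) E_N(T x) + r E_N(x), by Pascal's rule for the
  binomial weights. A sequence obeying such a convex recurrence with a convergent
  forcing term converges to the same limit, because the contraction factor 1 - r
  is less than one.\<close>

definition binomial_weight :: "real \<Rightarrow> nat \<Rightarrow> nat \<Rightarrow> real" where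
  "binomial_weight r N n = real (N choose n) * r ^ n * (1 - r) ^ (N - n)"

lemma binE_eq_sum_binomial_weight:
  "binE r y N = (\<Sum>n\<le>N. of_real (binomial_weight r N n) * y n)"
  unfolding binE_def binomial_weight_def by (simp add: atLeast0AtMost)

lemma binomial_weight_eq_0: "N < n \<Longrightarrow> binomial_weight r N n = 0"
  unfolding binomial_weight_def by simp

lemma binomial_weight_Suc_Suc:
  "binomial_weight r (Suc N) (Suc n) = r * binomial_weight r N n + (1 - r) * binomial_weight r N (Suc n)"
proof (cases "n < N")
  case True
  then have "N - n = Suc (N - Suc n)" by simp
  then show ?thesis
    unfolding binomial_weight_def binomial_Suc_Suc diff_Suc_Suc by (simp add: algebra_simps)
next
  case False
  then have choose_0: "N choose Suc n = 0" and diff_0: "N - n = 0" by simp_all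
  show ?thesis
    unfolding binomial_weight_def binomial_Suc_Suc diff_Suc_Suc choose_0 diff_0 by simp
qed

lemma binE_shiftR:
  "binE r (shiftR y) N = (\<Sum>m<N. of_real (binomial_weight r N (Suc m)) * y m)"
  unfolding binE_eq_sum_binomial_weight lessThan_Suc_atMost[symmetric]
  by (subst sum.lessThan_Suc_shift) (simp add: shiftR_def)

lemma binE_shiftR_Suc:
  "binE r (shiftR y) (Suc N) = (1 - r) *\<^sub>R binE r (shiftR y) N + r *\<^sub>R binE r y N"
proof -
  have "binE r (shiftR y) (Suc N) =
      (\<Sum>m\<le>N. of_real (r * binomial_weight r N m + (1 - r) * binomial_weight r N (Suc m)) * y m)"
    unfolding binE_shiftR binomial_weight_Suc_Suc lessThan_Suc_atMost[symmetric] ..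
  also have "\<dots> = (\<Sum>m\<le>N. r *\<^sub>R (of_real (binomial_weight r N m) * y m)
      + (1 - r) *\<^sub>R (of_real (binomial_weight r N (Suc m)) * y m))"
    by (intro sum.cong refl) (simp add: scaleR_conv_of_real algebra_simps)
  also have "\<dots> = r *\<^sub>R (\<Sum>m\<le>N. of_real (binomial_weight r N m) * y m)
      + (1 - r) *\<^sub>R (\<Sum>m\<le>N. of_real (binomial_weight r N (Suc m)) * y m)"
    by (simp add: sum.distrib scaleR_sum_right)
  also have "\<dots> = r *\<^sub>R binE r y N + (1 - r) *\<^sub>R binE r (shiftR y) N"
    unfolding binE_eq_sum_binomial_weight[of r y] binE_shiftR lessThan_Suc_atMost[symmetric]
    by (simp add: binomial_weight_eq_0)
  finally show ?thesis
    by (simp only: add.commute)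
qed

lemma contracting_recurrence_tendsto_0:
  fixes u v :: "nat \<Rightarrow> real"
  assumes "0 \<le> q" "q < 1"
    and nonneg: "\<And>n. 0 \<le> u n"
    and step: "\<And>n. u (Suc n) \<le> q * u n + v n"
    and "v \<longlonglongrightarrow> 0"
  shows "u \<longlonglongrightarrow> 0"
proof (rule LIMSEQ_I)
  fix e :: real
  assume "0 < e"
  with \<open>q < 1\<close> obtain M where M: "\<And>n. n \<ge> M \<Longrightarrow> v n < (1 - q) * e / 2"
    using LIMSEQ_D[OF \<open>v \<longlonglongrightarrow> 0\<close>, of "(1 - q) * e / 2"] by fastforce
  have bound: "u (M + k) \<le> q ^ k * u M + e / 2" for k
  proof (induction k)
    case 0
    show ?case using \<open>0 < e\<close> by simp
  next
    case (Suc k)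
    have "u (M + Suc k) \<le> q * u (M + k) + v (M + k)"
      using step by simp
    also have "\<dots> \<le> q * (q ^ k * u M + e / 2) + (1 - q) * e / 2"
      using Suc.IH M[of "M + k"] \<open>0 \<le> q\<close> by (intro add_mono mult_left_mono) auto
    also have "\<dots> = q ^ Suc k * u M + e / 2"
      by (simp add: field_simps)
    finally show ?case .
  qed
  have "(\<lambda>k. q ^ k * u M) \<longlonglongrightarrow> 0"
    using assms(1,2) by (intro tendsto_mult_left_zero LIMSEQ_power_zero) auto
  with \<open>0 < e\<close> obtain K where K: "\<And>k. k \<ge> K \<Longrightarrow> q ^ k * u M < e / 2"
    using LIMSEQ_D[of _ 0 "e / 2"] by fastforce
  have "u n < e" if "n \<ge> M + K" for n
  proof -
    have "u n \<le> q ^ (n - M) * u M + e / 2"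
      using bound[of "n - M"] that by simp
    moreover have "q ^ (n - M) * u M < e / 2"
      using that by (intro K) simp
    ultimately show ?thesis by simp
  qed
  then show "\<exists>N. \<forall>n\<ge>N. norm (u n - 0) < e"
    using nonneg by auto
qed

lemma convex_recurrence_tendsto:
  fixes a b :: "nat \<Rightarrow> 'a::real_normed_vector"
  assumes "0 \<le> q" "q < 1"
    and step: "\<And>n. a (Suc n) = q *\<^sub>R a n + (1 - q) *\<^sub>R b n"
    and "b \<longlonglongrightarrow> L"
  shows "a \<longlonglongrightarrow> L"
proof -
  have "(\<lambda>n. norm (a n - L)) \<longlonglongrightarrow> 0"
  proof (rule contracting_recurrence_tendsto_0)
    fix n
    have "a (Suc n) - L = q *\<^sub>R (a n - L) + (1 - q) *\<^sub>R (b n - L)"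
      by (simp add: step algebra_simps)
    then show "norm (a (Suc n) - L) \<le> q * norm (a n - L) + (1 - q) * norm (b n - L)"
      using norm_triangle_ineq[of "q *\<^sub>R (a n - L)" "(1 - q) *\<^sub>R (b n - L)"] assms(1,2)
      by simp
    show "(\<lambda>n. (1 - q) * norm (b n - L)) \<longlonglongrightarrow> 0"
      using \<open>b \<longlonglongrightarrow> L\<close> by (intro tendsto_mult_right_zero) (simp add: tendsto_norm_zero_iff LIM_zero_iff)
  qed (use assms in auto)
  then show ?thesis
    by (simp add: tendsto_norm_zero_iff LIM_zero_iff)
qed

lemma binE_shiftR_tendsto:
  assumes "0 < r" "r < 1" "(\<lambda>N. binE r y N) \<longlonglongrightarrow> L"
  shows "(\<lambda>N. binE r (shiftR y) N) \<longlonglongrightarrow> L"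
proof (rule convex_recurrence_tendsto)
  show "binE r (shiftR y) (Suc N) = (1 - r) *\<^sub>R binE r (shiftR y) N + (1 - (1 - r)) *\<^sub>R binE r y N" for N
    by (simp add: binE_shiftR_Suc)
qed (use assms in auto)

theorem mainTheorem6:
  fixes r :: real and x :: "nat \<Rightarrow> complex" and L :: complex
  assumes "0 < r" and "r < 1"
    and "(\<lambda>N. binE r x N) \<longlonglongrightarrow> L"
  shows "((\<lambda>N. binE r (shiftR x) N) \<longlonglongrightarrow> L) \<and>
         (\<forall>k::nat. (\<lambda>N. binE r ((shiftR ^^ k) x) N) \<longlonglongrightarrow> L)"
proof
  show "(\<lambda>N. binE r (shiftR x) N) \<longlonglongrightarrow> L"
    using assms by (rule binE_shiftR_tendsto)
  show "\<forall>k. (\<lambda>N. binE r ((shiftR ^^ k) x) N) \<longlonglongrightarrow> L"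
  proof
    fix k
    show "(\<lambda>N. binE r ((shiftR ^^ k) x) N) \<longlonglongrightarrow> L"
      by (induction k) (simp_all add: assms binE_shiftR_tendsto)
  qed
qed

end
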